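(* Let $a,b$ be integers with $1\le a\le b$. Then there exists a tree $T$ such that $\tau(T)=a$ and $\beta_p(T)=b$.
   Context: Graphs are finite, simple, connected. Two vertices $u,v$ are twins if $N(u)\setminus\{v\}=N(v)\setminus\{u\}$; the twin number $\tau(G)$ is the maximum cardinality of an equivalence class of the twin relation. For a partition $\Pi=\{S_1,\dots,S_k\}$ of $V(G)$, $r(u|\Pi)=(d(u,S_1),\dots,d(u,S_k))$ with $d(u,S)=\min_{w\in S}d(u,w)$; $\Pi$ is locating if $r(u|\Pi)\ne r(v|\Pi)$ for all distinct $u,v$; $\beta_p(G)$ is the minimum size of a locating partition (for the one-vertex graph, $\tau=\beta_p=1$). *)

theory Defs
  imports Main "HOL-Library.Disjoint_Sets"
begin

definition simple_graph :: "'a set \<Rightarrow> ('a \<Rightarrow> 'a \<Rightarrow> bool) \<Rightarrow> bool" where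
  "simple_graph V E \<longleftrightarrow> finite V \<and> V \<noteq> {} \<and>
     (\<forall>x y. E x y \<longrightarrow> x \<in> V \<and> y \<in> V) \<and>
     (\<forall>x y. E x y \<longrightarrow> E y x) \<and> (\<forall>x. \<not> E x x)"

definition edge_rel :: "('a \<Rightarrow> 'a \<Rightarrow> bool) \<Rightarrow> ('a \<times> 'a) set" where
  "edge_rel E = {(x, y). E x y}"

definition connected_graph :: "'a set \<Rightarrow> ('a \<Rightarrow> 'a \<Rightarrow> bool) \<Rightarrow> bool" where
  "connected_graph V E \<longleftrightarrow> simple_graph V E \<and>
     (\<forall>u\<in>V. \<forall>v\<in>V. (u, v) \<in> (edge_rel E)\<^sup>*)"

definition is_cycle :: "('a \<Rightarrow> 'a \<Rightarrow> bool) \<Rightarrow> 'a list \<Rightarrow> bool" where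
  "is_cycle E xs \<longleftrightarrow> length xs \<ge> 3 \<and> distinct xs \<and>
     (\<forall>i. Suc i < length xs \<longrightarrow> E (xs ! i) (xs ! Suc i)) \<and>
     E (last xs) (hd xs)"

definition is_tree :: "'a set \<Rightarrow> ('a \<Rightarrow> 'a \<Rightarrow> bool) \<Rightarrow> bool" where
  "is_tree V E \<longleftrightarrow> connected_graph V E \<and> (\<nexists>xs. is_cycle E xs)"

definition gdist :: "('a \<Rightarrow> 'a \<Rightarrow> bool) \<Rightarrow> 'a \<Rightarrow> 'a \<Rightarrow> nat" where
  "gdist E u v = (LEAST n. (u, v) \<in> (edge_rel E) ^^ n)"

definition set_dist :: "('a \<Rightarrow> 'a \<Rightarrow> bool) \<Rightarrow> 'a \<Rightarrow> 'a set \<Rightarrow> nat" where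
  "set_dist E u S = Min ((\<lambda>w. gdist E u w) ` S)"

definition locating_partition :: "'a set \<Rightarrow> ('a \<Rightarrow> 'a \<Rightarrow> bool) \<Rightarrow> 'a set set \<Rightarrow> bool" where
  "locating_partition V E P \<longleftrightarrow> partition_on V P \<and>
     (\<forall>u\<in>V. \<forall>v\<in>V. u \<noteq> v \<longrightarrow> (\<exists>S\<in>P. set_dist E u S \<noteq> set_dist E v S))"

definition partition_dimension :: "'a set \<Rightarrow> ('a \<Rightarrow> 'a \<Rightarrow> bool) \<Rightarrow> nat" where
  "partition_dimension V E = (LEAST k. \<exists>P. locating_partition V E P \<and> card P = k)"

definition nbhd :: "('a \<Rightarrow> 'a \<Rightarrow> bool) \<Rightarrow> 'a \<Rightarrow> 'a set" where
  "nbhd E u = {w. E u w}"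

definition twins :: "('a \<Rightarrow> 'a \<Rightarrow> bool) \<Rightarrow> 'a \<Rightarrow> 'a \<Rightarrow> bool" where
  "twins E u v \<longleftrightarrow> nbhd E u - {v} = nbhd E v - {u}"

definition twin_number :: "'a set \<Rightarrow> ('a \<Rightarrow> 'a \<Rightarrow> bool) \<Rightarrow> nat" where
  "twin_number V E = Max ((\<lambda>u. card {v\<in>V. twins E u v}) ` V)"

end

theory Submission
  imports Defs "HOL-Library.Nat_Bijection"
begin

text \<open>
  For b \<ge> 2 take a spider: a centre with a pendant leaves and legs of length two indexed by
  the pairs (p, q) \<in> [1, b)^2 other than (p, p) with p < a. Its only nontrivial twin class
  is the set of leaves. Put the centre and leaf 0 into block 0, leaf k into block k, and the middle
  and end of leg (p, q) into blocks p and q. These b blocks form a locating partition: vertices in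
  different blocks are separated by distance 0 to a block, and vertices in the same block by the
  blocks containing their neighbours, i.e. by distance 1.

  Conversely, a neighbour u of the centre reaches every vertex outside its branch through the
  centre, so two such vertices whose branches meet the classes of a locating partition in the same
  way have the same distances to all classes. Hence the a + (b - 1)^2 - (a - 1) branches get
  distinct pairs (class of u, class of the far end of its branch), and k classes need
  k^2 > (b - 1)^2. For b = 1 the one-vertex graph works.
\<close>

lemma not_is_cycle_if_unique_parent:
  fixes level :: "'a \<Rightarrow> nat"
  assumes sym: "\<And>u v. E u v \<Longrightarrow> E v u"
    and level_step: "\<And>u v. E u v \<Longrightarrow> level v = Suc (level u) \<or> level u = Suc (level v)"
    and unique_parent: "\<And>u v w. E u v \<Longrightarrow> E u w \<Longrightarrow> level v < level u \<Longrightarrow> level w < level u \<Longrightarrow> v = w"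
  shows "\<not> is_cycle E xs"
proof
  assume cyc: "is_cycle E xs"
  define n where "n = length xs"
  have "xs \<noteq> []" using cyc by (auto simp: is_cycle_def)
  have n3: "n \<ge> 3" and dist: "distinct xs"
    and adj: "\<And>i. Suc i < n \<Longrightarrow> E (xs ! i) (xs ! Suc i)" and closing: "E (xs ! (n - 1)) (xs ! 0)"
    using cyc \<open>xs \<noteq> []\<close> by (auto simp: is_cycle_def n_def last_conv_nth hd_conv_nth)
  \<comment> \<open>a vertex of maximal level on the cycle has two distinct lower neighbours on it\<close>
  obtain i where i: "i < n" and top: "\<And>j. j < n \<Longrightarrow> level (xs ! j) \<le> level (xs ! i)"
  proof -
    have "Max (level ` set xs) \<in> level ` set xs" using \<open>xs \<noteq> []\<close> by (intro Max_in) auto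
    then obtain i where i: "i < n" "level (xs ! i) = Max (level ` set xs)"
      by (auto simp: in_set_conv_nth n_def)
    have "level (xs ! j) \<le> level (xs ! i)" if "j < n" for j
      unfolding i(2) using that by (intro Max_ge) (auto simp: n_def)
    with i(1) show ?thesis by (rule that)
  qed
  define before where "before = (if i = 0 then n - 1 else i - 1)"
  define after where "after = (if i = n - 1 then 0 else i + 1)"
  have "before < n" "after < n" "before \<noteq> after"
    using i n3 by (auto simp: before_def after_def)
  have "E (xs ! before) (xs ! i)"
    using adj[of "i - 1"] closing i by (cases "i = 0") (auto simp: before_def)
  then have edge_before: "E (xs ! i) (xs ! before)" by (rule sym)
  have edge_after: "E (xs ! i) (xs ! after)"
    using adj[of i] closing i by (cases "i = n - 1") (auto simp: after_def)
  have "level (xs ! before) < level (xs ! i)"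
    using level_step[OF edge_before] top[OF \<open>before < n\<close>] by linarith
  moreover have "level (xs ! after) < level (xs ! i)"
    using level_step[OF edge_after] top[OF \<open>after < n\<close>] by linarith
  ultimately have "xs ! before = xs ! after" using unique_parent edge_before edge_after by blast
  with \<open>before < n\<close> \<open>after < n\<close> \<open>before \<noteq> after\<close> dist show False
    by (simp add: n_def nth_eq_iff_index_eq)
qed

lemma gdist_eqI:
  fixes D :: "'a \<Rightarrow> nat"
  assumes walk: "(u, w) \<in> edge_rel E ^^ D u"
    and target: "D w = 0"
    and step: "\<And>x y. E x y \<Longrightarrow> D x \<le> Suc (D y)"
  shows "gdist E u w = D u"
proof -
  have "D x \<le> n" if "(x, w) \<in> edge_rel E ^^ n" for x n
    using that
  proof (induction n arbitrary: x)
    case 0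
    then show ?case using target by simp
  next
    case (Suc n)
    obtain y where "(x, y) \<in> edge_rel E" "(y, w) \<in> edge_rel E ^^ n"
      using relpow_Suc_D2[OF Suc.prems] by blast
    with Suc.IH step show ?case by (fastforce simp: edge_rel_def)
  qed
  with walk show ?thesis unfolding gdist_def by (intro Least_equality)
qed

lemma gdist_eq_0_iff:
  assumes "(u, w) \<in> (edge_rel E)\<^sup>*"
  shows "gdist E u w = 0 \<longleftrightarrow> u = w"
proof
  assume "gdist E u w = 0"
  moreover obtain n where "(u, w) \<in> edge_rel E ^^ n" using assms rtrancl_power by blast
  ultimately have "(u, w) \<in> edge_rel E ^^ 0" unfolding gdist_def by (metis LeastI)
  then show "u = w" by simp
qed (simp add: gdist_def)

lemma gdist_eq_1_iff:
  assumes "(u, w) \<in> (edge_rel E)\<^sup>*"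
  shows "gdist E u w = 1 \<longleftrightarrow> u \<noteq> w \<and> E u w"
proof
  assume d: "gdist E u w = 1"
  obtain n where "(u, w) \<in> edge_rel E ^^ n" using assms rtrancl_power by blast
  then have "(u, w) \<in> edge_rel E ^^ 1" using d unfolding gdist_def by (metis LeastI)
  then show "u \<noteq> w \<and> E u w" using d gdist_eq_0_iff[OF assms] by (simp add: edge_rel_def)
next
  assume uw: "u \<noteq> w \<and> E u w"
  show "gdist E u w = 1"
    unfolding gdist_def
  proof (rule Least_equality)
    show "(u, w) \<in> edge_rel E ^^ 1" using uw by (simp add: edge_rel_def)
    show "1 \<le> n" if "(u, w) \<in> edge_rel E ^^ n" for n
      using that uw by (cases n) auto
  qed
qed

lemma set_dist_attained:
  assumes "finite S" "S \<noteq> {}"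
  obtains w where "w \<in> S" "set_dist E u S = gdist E u w"
proof -
  have "set_dist E u S \<in> gdist E u ` S" unfolding set_dist_def using assms by (intro Min_in) auto
  then show ?thesis using that by auto
qed

lemma set_dist_le: "finite S \<Longrightarrow> w \<in> S \<Longrightarrow> set_dist E u S \<le> gdist E u w"
  unfolding set_dist_def by (intro Min_le) auto

lemma set_dist_eq_0_iff:
  assumes "connected_graph V E" "u \<in> V" "S \<subseteq> V" "finite S" "S \<noteq> {}"
  shows "set_dist E u S = 0 \<longleftrightarrow> u \<in> S"
proof -
  have d0: "gdist E u w = 0 \<longleftrightarrow> u = w" if "w \<in> S" for w
    using assms that by (intro gdist_eq_0_iff) (auto simp: connected_graph_def)
  show ?thesis
  proof
    assume "set_dist E u S = 0"
    then show "u \<in> S" using set_dist_attained[OF assms(4,5)] d0 by metis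
  next
    assume "u \<in> S"
    then show "set_dist E u S = 0" using set_dist_le[OF assms(4), of u E u] d0[of u] by simp
  qed
qed

lemma set_dist_eq_1_iff:
  assumes "connected_graph V E" "u \<in> V" "S \<subseteq> V" "finite S" "S \<noteq> {}"
  shows "set_dist E u S = 1 \<longleftrightarrow> u \<notin> S \<and> (\<exists>w\<in>S. E u w)"
proof -
  have d1: "gdist E u w = 1 \<longleftrightarrow> u \<noteq> w \<and> E u w" if "w \<in> S" for w
    using assms that by (intro gdist_eq_1_iff) (auto simp: connected_graph_def)
  show ?thesis
  proof
    assume d: "set_dist E u S = 1"
    then obtain x where "x \<in> S" "gdist E u x = 1" using set_dist_attained[OF assms(4,5)] by metis
    then show "u \<notin> S \<and> (\<exists>w\<in>S. E u w)" using d set_dist_eq_0_iff[OF assms] d1 by auto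
  next
    assume "u \<notin> S \<and> (\<exists>w\<in>S. E u w)"
    then obtain w where "u \<notin> S" "w \<in> S" "E u w" by blast
    then have "set_dist E u S \<le> 1" using set_dist_le[OF assms(4), of w E u] d1[of w] by fastforce
    moreover have "set_dist E u S \<noteq> 0" using \<open>u \<notin> S\<close> set_dist_eq_0_iff[OF assms] by blast
    ultimately show "set_dist E u S = 1" by linarith
  qed
qed

lemma partition_on_same_part:
  assumes "partition_on A P" "S \<in> P" "S' \<in> P" "x \<in> S" "y \<in> S"
  shows "x \<in> S' \<longleftrightarrow> y \<in> S'"
  using assms partition_onD2[OF assms(1)] by (metis disjnt_iff pairwiseD)

lemma card_le_card_partition_squared:
  assumes part: "partition_on A P" and "finite P" and "N \<subseteq> A" and "f ` N \<subseteq> A"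
    and unique: "\<And>u v S T. \<lbrakk>u \<in> N; v \<in> N; S \<in> P; T \<in> P; u \<in> S; v \<in> S; f u \<in> T; f v \<in> T\<rbrakk>
      \<Longrightarrow> u = v"
  shows "card N \<le> card P ^ 2"
proof -
  define cell where "cell = (\<lambda>(S, T). {u \<in> N. u \<in> S \<and> f u \<in> T})"
  have "N \<subseteq> \<Union>P" "f ` N \<subseteq> \<Union>P"
    using assms partition_onD1[OF part] by simp_all
  then have "N = (\<Union>ST \<in> P \<times> P. cell ST)"
    by (auto simp: cell_def) blast+
  also have "card \<dots> \<le> (\<Sum>ST \<in> P \<times> P. card (cell ST))"
    using \<open>finite P\<close> by (intro card_UN_le) simp
  also have "\<dots> \<le> (\<Sum>ST \<in> P \<times> P. 1)"
  proof (intro sum_mono)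
    fix ST assume "ST \<in> P \<times> P"
    then have "u = v" if "u \<in> cell ST" "v \<in> cell ST" for u v
      using that unique by (auto simp: cell_def)
    then show "card (cell ST) \<le> 1"
      by (metis card.empty is_singletonI' is_singleton_altdef order_refl zero_le_one)
  qed
  finally show ?thesis by (simp add: card_cartesian_product power2_eq_square)
qed

lemma one_vertex_graph:
  shows "is_tree {v} (\<lambda>_ _. False)" "twin_number {v} (\<lambda>_ _. False) = 1"
    and "partition_dimension {v} (\<lambda>_ _. False) = 1"
proof -
  show "is_tree {v} (\<lambda>_ _. False)"
    by (auto simp: is_tree_def connected_graph_def simple_graph_def is_cycle_def)
  have "{w \<in> {v}. twins (\<lambda>_ _. False) v w} = {v}" by (auto simp: twins_def)
  then show "twin_number {v} (\<lambda>_ _. False) = 1" by (simp add: twin_number_def)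
  have "locating_partition {v} (\<lambda>_ _. False) {{v}}"
    by (auto simp: locating_partition_def intro: partition_on_space)
  moreover have "1 \<le> card P" if "locating_partition {v} (\<lambda>_ _. False) P" for P
  proof -
    have part: "partition_on {v} P" using that by (simp add: locating_partition_def)
    then have "finite P" by (rule finite_elements[rotated]) simp
    moreover have "P \<noteq> {}" using partition_onD1[OF part] by auto
    ultimately show ?thesis by (simp add: Suc_le_eq card_gt_0_iff)
  qed
  ultimately show "partition_dimension {v} (\<lambda>_ _. False) = 1"
    unfolding partition_dimension_def
    by (intro Least_equality exI[of _ "{{v}}"]) auto
qed

text \<open>
  Vertices are natural numbers with the centre at 0; the residue mod 3 tells leaves, middles and
  ends of legs apart, so depth, branch end and block are read off the code.
\<close>

definition leaf :: "nat \<Rightarrow> nat" where "leaf k = 3 * k + 1"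
definition leg_mid :: "nat \<times> nat \<Rightarrow> nat" where "leg_mid l = 3 * prod_encode l + 2"
definition leg_end :: "nat \<times> nat \<Rightarrow> nat" where "leg_end l = 3 * prod_encode l + 3"

lemma vertex_codes_distinct [simp]:
  "leaf k \<noteq> 0" "leg_mid l \<noteq> 0" "leg_end l \<noteq> 0"
  "leaf k \<noteq> leg_mid l" "leaf k \<noteq> leg_end l" "leg_mid l \<noteq> leg_end l'"
  "leaf k = leaf k' \<longleftrightarrow> k = k'" "leg_mid l = leg_mid l' \<longleftrightarrow> l = l'"
  "leg_end l = leg_end l' \<longleftrightarrow> l = l'"
  unfolding leaf_def leg_mid_def leg_end_def by (auto simp: prod_encode_eq) presburger+

lemmas vertex_codes_distinct_sym [simp] = vertex_codes_distinct(1-6)[symmetric]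

lemma vertex_codes_mod_div_3:
  "leaf k mod 3 = 1" "leg_mid l mod 3 = 2" "leg_end l mod 3 = 0"
  "leaf k div 3 = k" "leg_mid l div 3 = prod_encode l" "leg_end l div 3 = Suc (prod_encode l)"
  unfolding leaf_def leg_mid_def leg_end_def by presburger+

definition depth :: "nat \<Rightarrow> nat" where
  "depth u = (if u = 0 then 0 else if u mod 3 = 0 then 2 else 1)"

definition branch_end :: "nat \<Rightarrow> nat" where
  "branch_end u = (if u mod 3 = 2 then u + 1 else u)"

definition tree_dist :: "nat \<Rightarrow> nat \<Rightarrow> nat" where
  "tree_dist u w = (if u = w then 0 else if w = branch_end u \<or> u = branch_end w then 1
     else depth u + depth w)"

definition block :: "nat \<Rightarrow> nat" where
  "block u = (if u = 0 then 0 else if u mod 3 = 1 then u div 3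
     else if u mod 3 = 2 then fst (prod_decode (u div 3))
     else snd (prod_decode (u div 3 - 1)))"

lemma depth_simps [simp]: "depth 0 = 0" "depth (leaf k) = 1" "depth (leg_mid l) = 1" "depth (leg_end l) = 2"
  by (simp_all add: depth_def vertex_codes_mod_div_3)

lemma branch_end_simps [simp]:
  "branch_end 0 = 0" "branch_end (leaf k) = leaf k" "branch_end (leg_mid l) = leg_end l"
  "branch_end (leg_end l) = leg_end l"
  by (simp_all add: branch_end_def vertex_codes_mod_div_3) (simp add: leg_mid_def leg_end_def)

lemma block_simps [simp]:
  "block 0 = 0" "block (leaf k) = k" "block (leg_mid l) = fst l" "block (leg_end l) = snd l"
  by (simp_all add: block_def vertex_codes_mod_div_3)

locale spider =
  fixes a b :: nat
  assumes a_pos: "1 \<le> a" and a_le_b: "a \<le> b" and b_ge_2: "2 \<le> b"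
begin

text \<open>
  Leg (p, q) is the path 0 -- leg_mid (p, q) -- leg_end (p, q). The legs (p, p) with p < a are
  omitted because leaf p takes their place in block p.
\<close>

definition legs :: "(nat \<times> nat) set" where
  "legs = {(p, q). 1 \<le> p \<and> p < b \<and> 1 \<le> q \<and> q < b \<and> \<not> (p = q \<and> p < a)}"

definition inner :: "nat set" where
  "inner = leaf ` {..<a} \<union> leg_mid ` legs"

definition verts :: "nat set" where
  "verts = insert 0 (inner \<union> leg_end ` legs)"

definition adj :: "nat \<Rightarrow> nat \<Rightarrow> bool" where
  "adj u v \<longleftrightarrow> (u = 0 \<and> v \<in> inner) \<or> (v = 0 \<and> u \<in> inner) \<or>
     (\<exists>l\<in>legs. (u = leg_mid l \<and> v = leg_end l) \<or> (u = leg_end l \<and> v = leg_mid l))"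

lemma inner_simps [simp]:
  "0 \<notin> inner" "leaf k \<in> inner \<longleftrightarrow> k < a" "leg_mid l \<in> inner \<longleftrightarrow> l \<in> legs" "leg_end l \<notin> inner"
  by (auto simp: inner_def)

lemma verts_simps [simp]:
  "0 \<in> verts" "leaf k \<in> verts \<longleftrightarrow> k < a" "leg_mid l \<in> verts \<longleftrightarrow> l \<in> legs"
  "leg_end l \<in> verts \<longleftrightarrow> l \<in> legs"
  by (auto simp: verts_def)

lemma adj_simps [simp]:
  "adj 0 w \<longleftrightarrow> w \<in> inner" "adj (leaf k) w \<longleftrightarrow> k < a \<and> w = 0"
  "adj (leg_mid l) w \<longleftrightarrow> l \<in> legs \<and> (w = 0 \<or> w = leg_end l)"
  "adj (leg_end l) w \<longleftrightarrow> l \<in> legs \<and> w = leg_mid l"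
  by (auto simp: adj_def)

lemma verts_cases [consumes 1, case_names centre leaf mid tip]:
  assumes "u \<in> verts"
  obtains "u = 0" | k where "k < a" "u = leaf k" | p q where "(p, q) \<in> legs" "u = leg_mid (p, q)"
    | p q where "(p, q) \<in> legs" "u = leg_end (p, q)"
  using assms by (auto simp: verts_def inner_def)

lemma inner_cases [consumes 1, case_names leaf mid]:
  assumes "u \<in> inner"
  obtains k where "k < a" "u = leaf k" | p q where "(p, q) \<in> legs" "u = leg_mid (p, q)"
  using assms by (auto simp: inner_def)

lemma finite_legs: "finite legs"
  by (rule finite_subset[of _ "{..<b} \<times> {..<b}"]) (auto simp: legs_def)

lemma finite_verts: "finite verts"
  using finite_legs by (simp add: verts_def inner_def)

lemma inner_subset_verts: "inner \<subseteq> verts"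
  by (auto simp: verts_def)

lemma adj_sym: "adj u v \<Longrightarrow> adj v u"
  by (auto simp: adj_def)

lemma adj_in_verts: "adj u v \<Longrightarrow> u \<in> verts \<and> v \<in> verts"
  by (auto simp: adj_def verts_def)

lemma simple_graph: "simple_graph verts adj"
proof -
  have "verts \<noteq> {}" "\<not> adj u u" for u using verts_simps(1) by (blast, auto simp: adj_def)
  then show ?thesis unfolding simple_graph_def using finite_verts adj_sym adj_in_verts by blast
qed

lemma centre_walks:
  assumes "u \<in> verts"
  shows "(u, 0) \<in> edge_rel adj ^^ depth u" "(0, u) \<in> edge_rel adj ^^ depth u"
proof -
  have "(u, 0) \<in> edge_rel adj ^^ depth u \<and> (0, u) \<in> edge_rel adj ^^ depth u"
    using assms
  proof (cases rule: verts_cases)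
    case (tip p q)
    let ?l = "(p, q)"
    have "(leg_end ?l, leg_mid ?l) \<in> edge_rel adj" "(leg_mid ?l, 0) \<in> edge_rel adj"
      "(0, leg_mid ?l) \<in> edge_rel adj" "(leg_mid ?l, leg_end ?l) \<in> edge_rel adj"
      using tip
      by (simp_all add: edge_rel_def)
    then show ?thesis using tip by (auto simp: numeral_2_eq_2)
  qed (auto simp: edge_rel_def)
  then show "(u, 0) \<in> edge_rel adj ^^ depth u" "(0, u) \<in> edge_rel adj ^^ depth u" by simp_all
qed

lemma walk_tree_dist:
  assumes u: "u \<in> verts" and w: "w \<in> verts"
  shows "(u, w) \<in> edge_rel adj ^^ tree_dist u w"
proof -
  consider "u = w" | "u \<noteq> w" "w = branch_end u \<or> u = branch_end w" | "tree_dist u w = depth u + depth w"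
    by (metis tree_dist_def)
  then show ?thesis
  proof cases
    case 1
    then show ?thesis by (simp add: tree_dist_def)
  next
    case 2
    then have "adj u w" using u w
      by (cases rule: verts_cases[OF u]; cases rule: verts_cases[OF w]) auto
    then show ?thesis using 2 by (auto simp: tree_dist_def edge_rel_def)
  next
    case 3
    have "(u, w) \<in> edge_rel adj ^^ depth u O edge_rel adj ^^ depth w"
      using centre_walks u w by blast
    then show ?thesis unfolding 3 by (simp add: relpow_add)
  qed
qed

lemma tree_dist_step:
  assumes "w \<in> verts" "adj u y"
  shows "tree_dist u w \<le> Suc (tree_dist y w)"
  using assms by (cases rule: verts_cases) (auto simp: adj_def inner_def tree_dist_def)

lemma gdist_eq_tree_dist: "u \<in> verts \<Longrightarrow> w \<in> verts \<Longrightarrow> gdist adj u w = tree_dist u w"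
  by (intro gdist_eqI walk_tree_dist tree_dist_step) (auto simp: tree_dist_def)

lemma connected_graph: "connected_graph verts adj"
  unfolding connected_graph_def using simple_graph walk_tree_dist relpow_imp_rtrancl by blast

lemma is_tree: "is_tree verts adj"
proof -
  have "\<not> is_cycle adj xs" for xs
  proof (rule not_is_cycle_if_unique_parent[where level = depth])
    show "adj v u" if "adj u v" for u v using that by (rule adj_sym)
    show "depth v = Suc (depth u) \<or> depth u = Suc (depth v)" if "adj u v" for u v
      using that by (auto simp: adj_def inner_def)
    show "v = w" if "adj u v" "adj u w" "depth v < depth u" "depth w < depth u" for u v w
      using that by (auto simp: adj_def inner_def)
  qed
  then show ?thesis using connected_graph by (simp add: is_tree_def)
qed

lemma nbhd_simps:
  "nbhd adj 0 = inner" "k < a \<Longrightarrow> nbhd adj (leaf k) = {0}"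
  "l \<in> legs \<Longrightarrow> nbhd adj (leg_mid l) = {0, leg_end l}"
  "l \<in> legs \<Longrightarrow> nbhd adj (leg_end l) = {leg_mid l}"
  by (auto simp: nbhd_def)

lemma leaf_0_in_inner: "leaf 0 \<in> inner"
  using a_pos by simp

lemma inner_not_subset_singleton: "\<not> inner \<subseteq> {w}"
proof (cases "a = 1")
  case True
  then have "(1, 1) \<in> legs" unfolding legs_def using b_ge_2 by simp
  then have "leg_mid (1, 1) \<in> inner" by simp
  then show ?thesis using leaf_0_in_inner by (metis singletonD subsetD vertex_codes_distinct(4))
next
  case False
  then have "leaf 1 \<in> inner" using a_pos by simp
  then show ?thesis using leaf_0_in_inner by (metis singletonD subsetD vertex_codes_distinct(7) zero_neq_one)
qed

lemma inner_ne_singleton: "inner \<noteq> {w}" "inner - {w} \<noteq> {leg_end l}"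
  using inner_not_subset_singleton by (blast, metis Diff_iff inner_simps(4) singletonI)

lemma twins_iff:
  assumes u: "u \<in> verts" and v: "v \<in> verts"
  shows "twins adj u v \<longleftrightarrow> u = v \<or> (u \<in> leaf ` {..<a} \<and> v \<in> leaf ` {..<a})"
  by (cases rule: verts_cases[OF u]; cases rule: verts_cases[OF v];
      simp add: twins_def nbhd_simps image_iff doubleton_eq_iff inner_not_subset_singleton
        inner_ne_singleton inner_ne_singleton[THEN not_sym];
      metis Diff_iff insertI1 singletonD vertex_codes_distinct(2,3))

lemma card_twin_class:
  assumes "u \<in> verts"
  shows "card {v \<in> verts. twins adj u v} = (if u \<in> leaf ` {..<a} then a else 1)"
proof -
  have "{v \<in> verts. twins adj u v} = (if u \<in> leaf ` {..<a} then leaf ` {..<a} else {u})"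
    using twins_iff[OF assms] assms by auto
  moreover have "card (leaf ` {..<a}) = a"
    by (simp add: card_image inj_on_def)
  ultimately show ?thesis by simp
qed

lemma twin_number: "twin_number verts adj = a"
  unfolding twin_number_def
proof (rule Max_eqI)
  show "finite ((\<lambda>u. card {v \<in> verts. twins adj u v}) ` verts)"
    using finite_verts by simp
  show "n \<le> a" if "n \<in> (\<lambda>u. card {v \<in> verts. twins adj u v}) ` verts" for n
    using that card_twin_class a_pos by auto
  show "a \<in> (\<lambda>u. card {v \<in> verts. twins adj u v}) ` verts"
    using card_twin_class[of "leaf 0"] a_pos by (intro image_eqI[of _ _ "leaf 0"]) auto
qed

lemma branch_end_in_verts: "u \<in> inner \<Longrightarrow> branch_end u \<in> verts"
  by (cases rule: inner_cases) auto

lemma adj_branch_end: "u \<in> inner \<Longrightarrow> branch_end u \<noteq> u \<Longrightarrow> adj u (branch_end u)"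
  by (cases rule: inner_cases) auto

lemma gdist_from_inner:
  assumes u: "u \<in> inner" and w: "w \<in> verts" "w \<noteq> u" "w \<noteq> branch_end u"
  shows "gdist adj u w = Suc (depth w)"
  using inner_subset_verts assms
  by (cases rule: inner_cases[OF u]; cases rule: verts_cases[OF w(1)])
    (auto simp: gdist_eq_tree_dist tree_dist_def)

lemma set_dist_inner_eq:
  assumes S: "S \<subseteq> verts" "finite S" "S \<noteq> {}" and u: "u \<in> inner" and v: "v \<in> inner"
    and same: "u \<in> S \<longleftrightarrow> v \<in> S" "branch_end u \<in> S \<longleftrightarrow> branch_end v \<in> S"
  shows "set_dist adj u S = set_dist adj v S"
proof -
  have uv: "u \<in> verts" "v \<in> verts" using u v inner_subset_verts by auto
  consider "u \<in> S" | "u \<notin> S" "branch_end u \<in> S" | "u \<notin> S" "branch_end u \<notin> S" by blast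
  then show ?thesis
  proof cases
    case 1
    then show ?thesis using same uv set_dist_eq_0_iff[OF connected_graph _ S] by metis
  next
    case 2
    then have "branch_end u \<noteq> u" "branch_end v \<noteq> v" "v \<notin> S" "branch_end v \<in> S" using same by auto
    then have "adj u (branch_end u)" "adj v (branch_end v)" using u v adj_branch_end by auto
    then show ?thesis using 2 \<open>v \<notin> S\<close> \<open>branch_end v \<in> S\<close> uv set_dist_eq_1_iff[OF connected_graph _ S]
      by (metis (no_types, lifting))
  next
    case 3
    then have "gdist adj u w = gdist adj v w" if "w \<in> S" for w
      using that same S u v gdist_from_inner by (metis subsetD)
    then show ?thesis unfolding set_dist_def by (metis image_cong)
  qed
qed

lemma locating_inner_unique:
  assumes loc: "locating_partition verts adj P"
    and inner: "u \<in> inner" "v \<in> inner" and S: "S \<in> P" "u \<in> S" "v \<in> S"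
    and T: "T \<in> P" "branch_end u \<in> T" "branch_end v \<in> T"
  shows "u = v"
proof (rule ccontr)
  assume "u \<noteq> v"
  have part: "partition_on verts P" using loc by (simp add: locating_partition_def)
  have "set_dist adj u S' = set_dist adj v S'" if "S' \<in> P" for S'
  proof (rule set_dist_inner_eq)
    show "S' \<subseteq> verts" "S' \<noteq> {}"
      using that partition_onD1[OF part] partition_onD3[OF part] by auto
    then show "finite S'" using finite_verts finite_subset by blast
    show "u \<in> S' \<longleftrightarrow> v \<in> S'" "branch_end u \<in> S' \<longleftrightarrow> branch_end v \<in> S'"
      using partition_on_same_part[OF part S(1) that S(2,3)]
        partition_on_same_part[OF part T(1) that T(2,3)] .
  qed (fact inner)+
  with loc inner \<open>u \<noteq> v\<close> inner_subset_verts show False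
    unfolding locating_partition_def by blast
qed

lemma card_inner: "card inner = card legs + a"
proof -
  have "card (leaf ` {..<a}) = a" "card (leg_mid ` legs) = card legs"
    by (simp_all add: card_image inj_on_def)
  moreover have "leaf ` {..<a} \<inter> leg_mid ` legs = {}" by auto
  ultimately show ?thesis
    unfolding inner_def using finite_legs by (simp add: card_Un_disjoint)
qed

lemma card_legs: "(b - 1) ^ 2 \<le> card legs + (a - 1)"
proof -
  have "{1..<b} \<times> {1..<b} \<subseteq> legs \<union> (\<lambda>p. (p, p)) ` {1..<a}"
    by (auto simp: legs_def)
  then have "card ({1..<b} \<times> {1..<b}) \<le> card (legs \<union> (\<lambda>p. (p, p)) ` {1..<a})"
    using finite_legs by (intro card_mono) auto
  also have "\<dots> \<le> card legs + card ((\<lambda>p. (p, p)) ` {1..<a})" by (rule card_Un_le)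
  also have "card ((\<lambda>p. (p, p)) ` {1..<a}) = a - 1" by (simp add: card_image inj_on_def)
  finally show ?thesis by (simp add: card_cartesian_product power2_eq_square)
qed

lemma locating_partition_card_ge:
  assumes loc: "locating_partition verts adj P"
  shows "b \<le> card P"
proof -
  have part: "partition_on verts P" using loc by (simp add: locating_partition_def)
  have "card inner \<le> card P ^ 2"
    using finite_elements[OF finite_verts part] inner_subset_verts branch_end_in_verts
      locating_inner_unique[OF loc]
    by (intro card_le_card_partition_squared[OF part, where f = branch_end]) auto
  then have "(b - 1) ^ 2 < card P ^ 2"
    using card_inner card_legs a_pos by linarith
  then show ?thesis using power_less_imp_less_base by fastforce
qed

definition block_class :: "nat \<Rightarrow> nat set" where
  "block_class j = {v \<in> verts. block v = j}"

definition block_partition :: "nat set set" where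
  "block_partition = block_class ` {..<b}"

definition nbr_blocks :: "nat \<Rightarrow> nat set" where
  "nbr_blocks u = block ` nbhd adj u - {block u}"

lemma block_class_subset: "block_class j \<subseteq> verts"
  by (auto simp: block_class_def)

lemma finite_block_class: "finite (block_class j)"
  using finite_subset[OF block_class_subset finite_verts] .

lemma block_less:
  assumes "v \<in> verts"
  shows "block v < b"
  using assms a_le_b b_ge_2 by (cases rule: verts_cases) (auto simp: legs_def)

lemma block_class_nonempty: "j < b \<Longrightarrow> block_class j \<noteq> {}"
proof (cases "j < a")
  case True
  then have "leaf j \<in> block_class j" by (simp add: block_class_def)
  then show ?thesis by blast
next
  case False
  moreover assume "j < b"
  ultimately have "leg_mid (j, j) \<in> block_class j"
    using a_pos by (simp add: block_class_def legs_def)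
  then show ?thesis by blast
qed

lemma partition_on_block_partition: "partition_on verts block_partition"
proof (rule partition_onI)
  show "\<Union> block_partition = verts"
    using block_less by (auto simp: block_partition_def block_class_def)
  show "disjnt S T" if "S \<in> block_partition" "T \<in> block_partition" "S \<noteq> T" for S T
    using that by (auto simp: block_partition_def block_class_def disjnt_def)
  show "{} \<notin> block_partition"
    using block_class_nonempty by (auto simp: block_partition_def)
qed

lemma card_block_partition: "card block_partition = b"
proof -
  have "inj_on block_class {..<b}"
  proof (rule inj_onI)
    fix i j assume "i \<in> {..<b}" "j \<in> {..<b}" "block_class i = block_class j"
    then show "i = j" using block_class_nonempty by (force simp: block_class_def)
  qed
  then show ?thesis by (simp add: block_partition_def card_image)
qed

lemma nbr_blocks_simps:
  "k < a \<Longrightarrow> nbr_blocks (leaf k) = (if k = 0 then {} else {0})"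
  "(p, q) \<in> legs \<Longrightarrow> nbr_blocks (leg_mid (p, q)) = (if q = p then {0} else {0, q})"
  "(p, q) \<in> legs \<Longrightarrow> nbr_blocks (leg_end (p, q)) = (if p = q then {} else {p})"
  by (auto simp: nbr_blocks_def nbhd_simps legs_def)

lemma one_in_nbr_blocks_centre: "1 \<in> nbr_blocks 0"
proof (cases "a = 1")
  case True
  then have "(1, 1) \<in> legs" unfolding legs_def using b_ge_2 by simp
  then have "leg_mid (1, 1) \<in> nbhd adj 0" by (simp add: nbhd_simps)
  then show ?thesis unfolding nbr_blocks_def by (force simp del: One_nat_def)
next
  case False
  then have "leaf 1 \<in> nbhd adj 0" using a_pos by (simp add: nbhd_simps)
  then show ?thesis unfolding nbr_blocks_def by (force simp del: One_nat_def)
qed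

lemma nbr_blocks_inj:
  assumes u: "u \<in> verts" and v: "v \<in> verts" and "block u = block v" "nbr_blocks u = nbr_blocks v"
  shows "u = v"
  using assms one_in_nbr_blocks_centre
  by (cases rule: verts_cases[OF u]; cases rule: verts_cases[OF v])
    (simp_all add: nbr_blocks_simps legs_def doubleton_eq_iff split: if_splits)

lemma nbr_blocks_less: "j \<in> nbr_blocks u \<Longrightarrow> j < b"
  using adj_in_verts block_less by (auto simp: nbr_blocks_def nbhd_def)

lemma set_dist_block_class_eq_1_iff:
  assumes "u \<in> verts" "j < b"
  shows "set_dist adj u (block_class j) = 1 \<longleftrightarrow> j \<in> nbr_blocks u"
  using set_dist_eq_1_iff[OF connected_graph assms(1) block_class_subset finite_block_class
      block_class_nonempty[OF assms(2)]] adj_in_verts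
  by (auto simp: block_class_def nbr_blocks_def nbhd_def)

lemma locating_block_partition: "locating_partition verts adj block_partition"
  unfolding locating_partition_def
proof (intro conjI ballI impI partition_on_block_partition)
  fix u v assume u: "u \<in> verts" and v: "v \<in> verts" and "u \<noteq> v"
  show "\<exists>S\<in>block_partition. set_dist adj u S \<noteq> set_dist adj v S"
  proof (cases "block u = block v")
    case False
    have "set_dist adj x (block_class (block u)) = 0 \<longleftrightarrow> block x = block u" if "x \<in> verts" for x
      using set_dist_eq_0_iff[OF connected_graph that block_class_subset finite_block_class
          block_class_nonempty[OF block_less[OF u]]] that
      by (simp add: block_class_def)
    then show ?thesis
      using False u v block_less[OF u] by (metis block_partition_def imageI lessThan_iff)
  next
    case True
    then obtain j where j: "j \<in> nbr_blocks u \<longleftrightarrow> j \<notin> nbr_blocks v"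
      using nbr_blocks_inj u v \<open>u \<noteq> v\<close> by blast
    then have "j < b" using nbr_blocks_less by blast
    then show ?thesis
      using j set_dist_block_class_eq_1_iff[OF u] set_dist_block_class_eq_1_iff[OF v]
      unfolding block_partition_def by (metis imageI lessThan_iff)
  qed
qed

lemma partition_dimension: "partition_dimension verts adj = b"
  unfolding partition_dimension_def
  using locating_block_partition card_block_partition locating_partition_card_ge
  by (intro Least_equality) auto

end

theorem theorem8:
  fixes a b :: nat
  assumes "1 \<le> a" and "a \<le> b"
  shows "\<exists>(V :: nat set) E. is_tree V E \<and> twin_number V E = a \<and> partition_dimension V E = b"
proof (cases "b = 1")
  case True
  with assms have "a = 1" by simp
  with True show ?thesis using one_vertex_graph[of 0] by blast
next
  case False
  with assms interpret spider a b by unfold_locales simp_all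
  show ?thesis using is_tree twin_number partition_dimension by blast
qed

end
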